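(* Let $R$ be a $v$-domain. Then every nonzero finitely generated ideal of $R$ is $v$-basic.
   Context: For a domain $R$ with quotient field $K$: $I^{-1}=(R:I)=\{x\in K:xI\subseteq R\}$, $I_v=(I^{-1})^{-1}$. $R$ is a $v$-domain if every nonzero finitely generated ideal $I$ satisfies $(II^{-1})_v=R$. For a nonzero ideal $I$, an ideal $J\subseteq I$ is a $v$-reduction of $I$ if $(JI^n)_v=(I^{n+1})_v$ for some integer $n\ge0$; $I$ is $v$-basic if every $v$-reduction $J$ of $I$ satisfies $J_v=I_v$. *)

theory Defs
  imports "HOL-Computational_Algebra.Fraction_Field"
begin

text \<open>Setting: R is an integral domain (type class idom) and K = 'a fract is its
quotient field. Ideals of R are subsets of 'a; fractional subsets live in K.\<close>

definition emb :: "'a::idom \<Rightarrow> 'a fract" where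
  "emb r = Fract r 1"

definition Rset :: "'a::idom fract set" where
  "Rset = range emb"

definition is_ideal :: "'a::idom set \<Rightarrow> bool" where
  "is_ideal I \<longleftrightarrow> 0 \<in> I \<and> (\<forall>a\<in>I. \<forall>b\<in>I. a + b \<in> I) \<and> (\<forall>r a. a \<in> I \<longrightarrow> r * a \<in> I)"

definition fin_gen :: "'a::idom set \<Rightarrow> bool" where
  "fin_gen I \<longleftrightarrow> (\<exists>F. finite F \<and> I = {\<Sum>a\<in>F. c a * a | c. True})"

definition fprod :: "'a::idom fract set \<Rightarrow> 'a fract set \<Rightarrow> 'a fract set" where
  "fprod A B = {x. \<exists>(n::nat) f g. x = (\<Sum>i<n. f i * g i) \<and> (\<forall>i<n. f i \<in> A \<and> g i \<in> B)}"

fun fpow :: "'a::idom fract set \<Rightarrow> nat \<Rightarrow> 'a fract set" where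
  "fpow A 0 = Rset"
| "fpow A (Suc n) = fprod A (fpow A n)"

definition finv :: "'a::idom fract set \<Rightarrow> 'a fract set" where
  "finv A = {x. \<forall>a\<in>A. x * a \<in> Rset}"

definition vclos :: "'a::idom fract set \<Rightarrow> 'a fract set" where
  "vclos A = finv (finv A)"

definition frac :: "'a::idom set \<Rightarrow> 'a fract set" where
  "frac I = emb ` I"

definition v_domain :: "'a::idom itself \<Rightarrow> bool" where
  "v_domain _ \<longleftrightarrow> (\<forall>I :: 'a set. is_ideal I \<and> fin_gen I \<and> I \<noteq> {0} \<longrightarrow>
      vclos (fprod (frac I) (finv (frac I))) = Rset)"

definition v_reduction :: "'a::idom set \<Rightarrow> 'a set \<Rightarrow> bool" where
  "v_reduction J I \<longleftrightarrow> is_ideal J \<and> J \<subseteq> I \<and>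
     (\<exists>n. vclos (fprod (frac J) (fpow (frac I) n)) = vclos (fpow (frac I) (Suc n)))"

definition v_basic :: "'a::idom set \<Rightarrow> bool" where
  "v_basic I \<longleftrightarrow> (\<forall>J. v_reduction J I \<longrightarrow> vclos (frac J) = vclos (frac I))"

end

theory Submission
  imports Defs
begin

text \<open>The hypothesis makes every finitely generated nonzero ideal I v-invertible,
  (I I^-1)_v = R. Since the v-closure of a product depends only on the v-closures of its
  factors, also (I^n (I^-1)^n)_v = R. A v-reduction J of I satisfies (J I^n)_v = (I I^n)_v;
  multiplying both sides by (I^-1)^n and taking v-closures cancels I^n, leaving J_v = I_v.\<close>

lemma Rset_zero: "0 \<in> Rset"
  unfolding Rset_def emb_def by (rule range_eqI[of _ _ 0]) (simp add: Zero_fract_def)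

lemma Rset_one: "1 \<in> Rset"
  unfolding Rset_def emb_def by (rule range_eqI[of _ _ 1]) (simp add: One_fract_def)

lemma Rset_add: "a \<in> Rset \<Longrightarrow> b \<in> Rset \<Longrightarrow> a + b \<in> Rset"
  unfolding Rset_def emb_def by auto

lemma Rset_mult: "a \<in> Rset \<Longrightarrow> b \<in> Rset \<Longrightarrow> a * b \<in> Rset"
  unfolding Rset_def emb_def by auto

lemma Rset_sum: "(\<And>i. i \<in> S \<Longrightarrow> f i \<in> Rset) \<Longrightarrow> sum f S \<in> Rset"
  by (induction S rule: infinite_finite_induct) (auto simp: Rset_zero Rset_add)

lemma mem_finv_fprod_iff:
  "x \<in> finv (fprod A B) \<longleftrightarrow> (\<forall>a\<in>A. \<forall>b\<in>B. x * (a * b) \<in> Rset)"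
proof
  assume x: "x \<in> finv (fprod A B)"
  show "\<forall>a\<in>A. \<forall>b\<in>B. x * (a * b) \<in> Rset"
  proof (intro ballI)
    fix a b assume "a \<in> A" "b \<in> B"
    then have "a * b \<in> fprod A B"
      unfolding fprod_def by (intro CollectI exI[of _ "1::nat"] exI[of _ "\<lambda>_. a"] exI[of _ "\<lambda>_. b"]) simp
    with x show "x * (a * b) \<in> Rset" unfolding finv_def by blast
  qed
next
  assume x: "\<forall>a\<in>A. \<forall>b\<in>B. x * (a * b) \<in> Rset"
  show "x \<in> finv (fprod A B)"
    unfolding finv_def fprod_def
    using x by (auto simp: sum_distrib_left intro!: Rset_sum)
qed

lemma mem_finv_fprod_iff_right: "x \<in> finv (fprod A B) \<longleftrightarrow> (\<forall>b\<in>B. x * b \<in> finv A)"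
proof -
  have swap: "x * b * a = x * (a * b)" for a b by (simp add: ac_simps)
  show ?thesis unfolding mem_finv_fprod_iff unfolding finv_def mem_Collect_eq swap by blast
qed

lemma mem_finv_fprod_iff_left: "x \<in> finv (fprod A B) \<longleftrightarrow> (\<forall>a\<in>A. x * a \<in> finv B)"
proof -
  have assoc: "x * a * b = x * (a * b)" for a b by (simp add: ac_simps)
  show ?thesis unfolding mem_finv_fprod_iff unfolding finv_def mem_Collect_eq assoc by blast
qed

lemma finv_fprod_commute: "finv (fprod A B) = finv (fprod B A)"
  unfolding set_eq_iff mem_finv_fprod_iff by (metis mult.commute)

lemma finv_fprod_assoc: "finv (fprod (fprod A B) C) = finv (fprod A (fprod B C))"
proof (rule set_eqI)
  fix x :: "'a fract"
  have right: "x * c * (a * b) = x * (a * b * c)" and left: "x * a * (b * c) = x * (a * b * c)"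
    for a b c by (simp_all add: ac_simps)
  have "x \<in> finv (fprod (fprod A B) C) \<longleftrightarrow> (\<forall>c\<in>C. x * c \<in> finv (fprod A B))"
    by (rule mem_finv_fprod_iff_right)
  also have "\<dots> \<longleftrightarrow> (\<forall>c\<in>C. \<forall>a\<in>A. \<forall>b\<in>B. x * c * (a * b) \<in> Rset)"
    by (simp only: mem_finv_fprod_iff)
  also have "\<dots> \<longleftrightarrow> (\<forall>a\<in>A. \<forall>b\<in>B. \<forall>c\<in>C. x * (a * b * c) \<in> Rset)"
    unfolding right by blast
  also have "\<dots> \<longleftrightarrow> (\<forall>a\<in>A. \<forall>b\<in>B. \<forall>c\<in>C. x * a * (b * c) \<in> Rset)"
    unfolding left ..
  also have "\<dots> \<longleftrightarrow> (\<forall>a\<in>A. x * a \<in> finv (fprod B C))"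
    by (simp only: mem_finv_fprod_iff)
  also have "\<dots> \<longleftrightarrow> x \<in> finv (fprod A (fprod B C))"
    by (rule mem_finv_fprod_iff_left[symmetric])
  finally show "x \<in> finv (fprod (fprod A B) C) \<longleftrightarrow> x \<in> finv (fprod A (fprod B C))" .
qed

lemma finv_fprod_cong_left: "finv A = finv A' \<Longrightarrow> finv (fprod A B) = finv (fprod A' B)"
  unfolding set_eq_iff mem_finv_fprod_iff_right by simp

lemma finv_fprod_cong_right: "finv B = finv B' \<Longrightarrow> finv (fprod A B) = finv (fprod A B')"
  unfolding set_eq_iff mem_finv_fprod_iff_left by simp

lemma finv_fprod_Rset: "finv (fprod A Rset) = finv A"
proof (rule set_eqI)
  fix x :: "'a fract"
  have "x * a \<in> Rset" if "\<forall>b\<in>Rset. x * (a * b) \<in> Rset" for a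
  proof -
    have "x * (a * 1) \<in> Rset" using that Rset_one by blast
    then show ?thesis by simp
  qed
  moreover have "x * (a * b) \<in> Rset" if "x * a \<in> Rset" "b \<in> Rset" for a b
    using Rset_mult[OF that] by (simp add: mult.assoc)
  ultimately show "x \<in> finv (fprod A Rset) \<longleftrightarrow> x \<in> finv A"
    unfolding mem_finv_fprod_iff unfolding finv_def by blast
qed

lemma finv_Rset: "finv Rset = Rset"
  unfolding finv_def using Rset_one Rset_mult by force

lemma finv_antimono: "A \<subseteq> B \<Longrightarrow> finv B \<subseteq> finv A"
  unfolding finv_def by blast

lemma subset_vclos: "A \<subseteq> vclos A"
proof
  fix a assume "a \<in> A"
  then have "y * a \<in> Rset" if "y \<in> finv A" for y
    using that unfolding finv_def by blast
  then show "a \<in> vclos A"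
    unfolding vclos_def finv_def[of "finv A"] by (simp add: mult.commute)
qed

lemma finv_vclos: "finv (vclos A) = finv A"
proof
  show "finv (vclos A) \<subseteq> finv A" by (rule finv_antimono[OF subset_vclos])
  show "finv A \<subseteq> finv (vclos A)" using subset_vclos[of "finv A"] unfolding vclos_def .
qed

lemma finv_eq_if_vclos_eq: "vclos A = vclos B \<Longrightarrow> finv A = finv B"
  using finv_vclos[of A] finv_vclos[of B] by simp

lemma vclos_eq_Rset_iff: "vclos M = Rset \<longleftrightarrow> finv M = Rset"
proof
  assume "vclos M = Rset"
  then have "finv (vclos M) = finv Rset" by simp
  then show "finv M = Rset" by (simp only: finv_vclos finv_Rset)
next
  assume "finv M = Rset"
  then show "vclos M = Rset" unfolding vclos_def by (simp add: finv_Rset)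
qed

lemma finv_fprod_vclos_Rset: "vclos M = Rset \<Longrightarrow> finv (fprod A M) = finv A"
  using finv_fprod_cong_right[of M Rset A] finv_fprod_Rset[of A]
  by (simp add: vclos_eq_Rset_iff finv_Rset)

lemma vclos_fprod_fpow_finv:
  assumes "vclos (fprod A (finv A)) = Rset"
  shows "vclos (fprod (fpow A n) (fpow (finv A) n)) = Rset"
proof (induction n)
  case 0
  show ?case by (simp add: vclos_eq_Rset_iff finv_fprod_Rset finv_Rset)
next
  case (Suc n)
  let ?P = "fpow A n" and ?Q = "fpow (finv A) n"
  have "finv (fprod (fprod A ?P) (fprod (finv A) ?Q))
      = finv (fprod A (fprod ?P (fprod (finv A) ?Q)))"
    by (rule finv_fprod_assoc)
  also have "\<dots> = finv (fprod A (fprod (fprod ?P (finv A)) ?Q))"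
    by (intro finv_fprod_cong_right finv_fprod_assoc[symmetric])
  also have "\<dots> = finv (fprod A (fprod (fprod (finv A) ?P) ?Q))"
    by (intro finv_fprod_cong_right finv_fprod_cong_left finv_fprod_commute)
  also have "\<dots> = finv (fprod A (fprod (finv A) (fprod ?P ?Q)))"
    by (intro finv_fprod_cong_right finv_fprod_assoc)
  also have "\<dots> = finv (fprod (fprod A (finv A)) (fprod ?P ?Q))"
    by (rule finv_fprod_assoc[symmetric])
  also have "\<dots> = finv (fprod A (finv A))"
    using Suc.IH by (rule finv_fprod_vclos_Rset)
  also have "\<dots> = Rset"
    using assms by (simp add: vclos_eq_Rset_iff)
  finally show ?case by (simp add: vclos_eq_Rset_iff)
qed

lemma vclos_cancel_fpow:
  assumes invertible: "vclos (fprod A (finv A)) = Rset"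
    and reduction: "vclos (fprod B (fpow A n)) = vclos (fpow A (Suc n))"
  shows "vclos B = vclos A"
proof -
  let ?P = "fpow A n" and ?Q = "fpow (finv A) n"
  have cancel: "finv X = finv (fprod (fprod X ?P) ?Q)" for X
    using finv_fprod_vclos_Rset[OF vclos_fprod_fpow_finv[OF invertible], of X]
    by (simp add: finv_fprod_assoc)
  have "finv (fprod B ?P) = finv (fprod A ?P)"
    using finv_eq_if_vclos_eq[OF reduction] by simp
  then have "finv (fprod (fprod B ?P) ?Q) = finv (fprod (fprod A ?P) ?Q)"
    by (rule finv_fprod_cong_left)
  then have "finv B = finv A"
    unfolding cancel[symmetric] .
  then show ?thesis by (simp add: vclos_def)
qed

theorem proposition1p6:
  assumes "v_domain TYPE('a::idom)"
    and "is_ideal (I :: 'a set)" and "fin_gen I" and "I \<noteq> {0}"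
  shows "v_basic I"
  unfolding v_basic_def
proof (intro allI impI)
  fix J :: "'a set"
  assume "v_reduction J I"
  then obtain n where "vclos (fprod (frac J) (fpow (frac I) n)) = vclos (fpow (frac I) (Suc n))"
    unfolding v_reduction_def by blast
  moreover have "vclos (fprod (frac I) (finv (frac I))) = Rset"
    using assms unfolding v_domain_def by blast
  ultimately show "vclos (frac J) = vclos (frac I)"
    by (rule vclos_cancel_fpow[rotated])
qed

end
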